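(* For a finite graph $G=(V,E)$, the function $$S^B(\mathbf{x})=\frac12\sum_{v\in V}\Big\{\sum_{e\in\partial v}\big(-x_e\ln x_e+(1-x_e)\ln(1-x_e)\big)-2\Big(1-\sum_{e\in\partial v}x_e\Big)\ln\Big(1-\sum_{e\in\partial v}x_e\Big)\Big\}$$ (with $0\ln0=0$) is non-negative and concave on $FM(G)$.
   Context: $\partial v$ denotes the set of edges incident to $v$. $FM(G)=\{\mathbf{x}\in\mathbb{R}^E:x_e\ge0,\ \sum_{e\in\partial v}x_e\le1\ \forall v\in V\}$. *)

theory Defs
  imports Complex_Main
begin

definition finite_simple_graph :: "'a set \<Rightarrow> 'a set set \<Rightarrow> bool" where
  "finite_simple_graph V E \<longleftrightarrow> finite V \<and> (\<forall>e\<in>E. e \<subseteq> V \<and> card e = 2)"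

definition incident :: "'a set set \<Rightarrow> 'a \<Rightarrow> 'a set set" where
  "incident E v = {e\<in>E. v \<in> e}"

text \<open>Fractional matching polytope FM(G), vectors in R^E represented as functions
  on edge sets that vanish outside E.\<close>
definition FM :: "'a set \<Rightarrow> 'a set set \<Rightarrow> ('a set \<Rightarrow> real) set" where
  "FM V E = {x. (\<forall>e. e \<notin> E \<longrightarrow> x e = 0) \<and> (\<forall>e\<in>E. x e \<ge> 0)
               \<and> (\<forall>v\<in>V. (\<Sum>e\<in>incident E v. x e) \<le> 1)}"

definition xlnx :: "real \<Rightarrow> real" where
  "xlnx t = (if t = 0 then 0 else t * ln t)"

definition SB :: "'a set \<Rightarrow> 'a set set \<Rightarrow> ('a set \<Rightarrow> real) \<Rightarrow> real" where
  "SB V E x = (1/2) * (\<Sum>v\<in>V.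
      (\<Sum>e\<in>incident E v. - xlnx (x e) + xlnx (1 - x e))
      - 2 * xlnx (1 - (\<Sum>e\<in>incident E v. x e)))"

definition concave_fun_on :: "('b \<Rightarrow> real) set \<Rightarrow> (('b \<Rightarrow> real) \<Rightarrow> real) \<Rightarrow> bool" where
  "concave_fun_on S f \<longleftrightarrow> (\<forall>x\<in>S. \<forall>y\<in>S. \<forall>t::real. 0 \<le> t \<and> t \<le> 1 \<longrightarrow>
      f (\<lambda>e. t * x e + (1 - t) * y e) \<ge> t * f x + (1 - t) * f y)"

end

theory Submission
  imports Defs "HOL-Analysis.Analysis" "HOL-Real_Asymp.Real_Asymp"
begin

text \<open>
  \<open>S\<^sup>B\<close> is half a sum over vertices \<open>v\<close> of a term depending only on the values \<open>x\<^sub>e\<close> on the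
  edges incident to \<open>v\<close>, and on \<open>FM(G)\<close> these values lie in the sub-simplex
  \<open>{x \<ge> 0, \<Sum>x \<le> 1}\<close>.  So it suffices to show that the vertex term is concave on the
  sub-simplex and vanishes at its vertices (the origin and the unit vectors); concavity then
  forces non-negativity.

  Concavity is checked on segments.  On an open segment the second derivative is
  \<open>-(\<Sum> c\<^sub>e\<^sup>2/w(u\<^sub>e) + 2(\<Sum>c)\<^sup>2/(1-\<Sum>u))\<close> with \<open>w(u) = u(1-u)/(1-2u)\<close>; this form is
  non-negative because at most one coordinate exceeds \<open>1/2\<close>, and its negative weight is
  dominated via Cauchy--Schwarz.  Continuity of \<open>t ln t\<close> at \<open>0\<close> extends concavity to
  closed segments.
\<close>

text \<open>The function \<open>t \<mapsto> t ln t\<close> (with \<open>0 ln 0 = 0\<close>) is continuous on \<open>[0,\<infinity>)\<close>;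
  this is what lets concavity pass from open segments to closed ones.\<close>
lemma xlnx_continuous_on: "continuous_on {0..} xlnx"
proof -
  have "continuous (at x within {0..}) xlnx" if "0 \<le> x" for x
  proof (cases "x = 0")
    case True
    have "((\<lambda>t::real. t * ln t) \<longlongrightarrow> 0) (at_right 0)"
      by real_asymp
    then have "(xlnx \<longlongrightarrow> 0) (at_right 0)"
      by (rule Lim_transform_eventually)
        (auto simp: xlnx_def eventually_at_right_field intro: exI[of _ 1])
    then show ?thesis
      using True by (simp add: continuous_within at_within_Ici_at_right xlnx_def)
  next
    case False
    with that have "0 < x" by simp
    have "eventually (\<lambda>t. t * ln t = xlnx t) (nhds x)"
      using eventually_nhds_in_open[of "{0<..}" x] \<open>0 < x\<close>
      by (auto elim!: eventually_mono simp: xlnx_def)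
    moreover have "isCont (\<lambda>t. t * ln t) x"
      using \<open>0 < x\<close> by (intro continuous_intros) auto
    ultimately show ?thesis
      by (simp add: isCont_cong continuous_at_imp_continuous_within)
  qed
  then show ?thesis by (simp add: continuous_on_eq_continuous_within)
qed

lemma xlnx_has_derivative:
  assumes "0 < t"
  shows "(xlnx has_real_derivative ln t + 1) (at t)"
proof (rule has_field_derivative_transform_within_open[where S = "{0<..}"])
  show "((\<lambda>t. t * ln t) has_real_derivative ln t + 1) (at t)"
    using assms by (auto intro!: derivative_eq_intros)
qed (use assms in \<open>auto simp: xlnx_def\<close>)

text \<open>Hence, along a segment, each
  argument of \<open>xlnx\<close> is either in the smooth region or constantly \<open>0\<close>.\<close>
lemma affine_pos_or_const:
  fixes a b s :: real
  assumes "0 \<le> a" "0 \<le> a + b" "0 < s" "s < 1"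
  shows "0 < a + s * b \<or> (a = 0 \<and> b = 0)"
proof -
  have "a + s * b = (1 - s) * a + s * (a + b)" by (simp add: algebra_simps)
  moreover have "0 \<le> (1 - s) * a" "0 \<le> s * (a + b)" using assms by auto
  moreover have "0 < (1 - s) * a \<or> 0 < s * (a + b)" if "\<not> (a = 0 \<and> a + b = 0)"
    using assms that by (auto simp: less_le)
  ultimately show ?thesis by force
qed

lemma xlnx_affine_has_derivative:
  fixes a b s :: real
  assumes "0 < a + s * b \<or> (a = 0 \<and> b = 0)"
  shows "((\<lambda>s. xlnx (a + s * b)) has_real_derivative b * (ln (a + s * b) + 1)) (at s)"
  using assms
proof
  assume "0 < a + s * b"
  have "((\<lambda>s. a + s * b) has_real_derivative b) (at s)"
    by (auto intro!: derivative_eq_intros)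
  from DERIV_chain'[OF this xlnx_has_derivative[OF \<open>0 < a + s * b\<close>]]
  show ?thesis by (simp add: mult.commute)
qed (simp add: xlnx_def)

lemma ln_affine_has_derivative:
  fixes a b s :: real
  assumes "0 < a + s * b \<or> (a = 0 \<and> b = 0)"
  shows "((\<lambda>s. b * (ln (a + s * b) + 1)) has_real_derivative b\<^sup>2 / (a + s * b)) (at s)"
  using assms
proof
  assume "0 < a + s * b"
  then show ?thesis by (auto intro!: derivative_eq_intros simp: field_simps power2_eq_square)
qed simp

lemma shrink_into_open_interval:
  fixes a b z \<epsilon> :: real
  assumes "a < b" "z \<in> {a..b}" "0 < \<epsilon>" "\<epsilon> \<le> 1"
  shows "(1 - \<epsilon>) * z + \<epsilon> * ((a + b) / 2) \<in> {a<..<b}"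
proof -
  have "(1 - \<epsilon>) * a \<le> (1 - \<epsilon>) * z" "(1 - \<epsilon>) * z \<le> (1 - \<epsilon>) * b"
    using assms by (auto intro: mult_left_mono)
  moreover have "\<epsilon> * a < \<epsilon> * ((a + b) / 2)" "\<epsilon> * ((a + b) / 2) < \<epsilon> * b"
    using assms by (auto intro!: mult_strict_left_mono)
  moreover have "(1 - \<epsilon>) * a + \<epsilon> * a = a" "(1 - \<epsilon>) * b + \<epsilon> * b = b"
    by (simp_all add: algebra_simps)
  ultimately show ?thesis by auto
qed

text \<open>A function concave on an open interval and continuous on its closure is concave on the
  closure.  Needed because the second derivative of \<open>xlnx\<close> blows up at \<open>0\<close>.\<close>
lemma concave_on_closed_interval:
  fixes f :: "real \<Rightarrow> real" and a b :: real
  assumes "a < b" and conc: "concave_on {a<..<b} f" and cont: "continuous_on {a..b} f"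
  shows "concave_on {a..b} f"
  unfolding concave_on_iff
proof (intro conjI ballI allI impI)
  fix x y \<mu> \<nu> :: real
  assume xy: "x \<in> {a..b}" "y \<in> {a..b}" and \<mu>\<nu>: "0 \<le> \<mu>" "0 \<le> \<nu>" "\<mu> + \<nu> = 1"
  then have \<nu>: "\<nu> = 1 - \<mu>" by simp
  text \<open>Shrink the segment towards the midpoint, use concavity inside, and let the shrinking
    factor tend to \<open>0\<close>.\<close>
  define g where "g z \<epsilon> = (1 - \<epsilon>) * z + \<epsilon> * ((a + b) / 2)" for z \<epsilon> :: real
  note inside = shrink_into_open_interval[OF \<open>a < b\<close>, folded g_def]
  have near: "eventually (\<lambda>\<epsilon>. 0 < \<epsilon> \<and> \<epsilon> \<le> 1) (at_right (0::real))"
    unfolding eventually_at_right_field by (auto intro!: exI[of _ 1])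
  have lim: "((\<lambda>\<epsilon>. f (g z \<epsilon>)) \<longlongrightarrow> f z) (at_right 0)" if "z \<in> {a..b}" for z
  proof (rule continuous_on_tendsto_compose[OF cont _ that])
    have "((\<lambda>\<epsilon>. g z \<epsilon>) \<longlongrightarrow> g z 0) (at_right 0)"
      unfolding g_def by (intro tendsto_intros)
    then show "((\<lambda>\<epsilon>. g z \<epsilon>) \<longlongrightarrow> z) (at_right 0)" by (simp add: g_def)
    show "eventually (\<lambda>\<epsilon>. g z \<epsilon> \<in> {a..b}) (at_right 0)"
      using near
    proof eventually_elim
      case (elim \<epsilon>)
      with inside[OF that, of \<epsilon>] show ?case by auto
    qed
  qed
  have "eventually (\<lambda>\<epsilon>. \<mu> * f (g x \<epsilon>) + \<nu> * f (g y \<epsilon>) \<le> f (g (\<mu> * x + \<nu> * y) \<epsilon>)) (at_right 0)"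
    using near
  proof eventually_elim
    case (elim \<epsilon>)
    have "g (\<mu> * x + \<nu> * y) \<epsilon> = (1 - \<nu>) * g x \<epsilon> + \<nu> * g y \<epsilon>"
      unfolding g_def \<nu> by (simp add: field_simps)
    moreover have "g x \<epsilon> \<in> {a<..<b}" "g y \<epsilon> \<in> {a<..<b}"
      using inside xy elim by auto
    ultimately show ?case
      using concave_onD[OF conc, of \<nu> "g x \<epsilon>" "g y \<epsilon>"] \<mu>\<nu> unfolding \<nu> by simp
  qed
  moreover have "((\<lambda>\<epsilon>. \<mu> * f (g x \<epsilon>) + \<nu> * f (g y \<epsilon>)) \<longlongrightarrow> \<mu> * f x + \<nu> * f y) (at_right 0)"
    using xy by (intro tendsto_add tendsto_mult_left lim)
  moreover have "\<mu> * x + \<nu> * y \<in> {a..b}"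
    using convexD[OF convex_real_interval(5) xy \<mu>\<nu>] by simp
  ultimately show "\<mu> * f x + \<nu> * f y \<le> f (\<mu> *\<^sub>R x + \<nu> *\<^sub>R y)"
    using tendsto_le[OF trivial_limit_at_right_real lim] by simp
qed simp

text \<open>For \<open>0 < u < 1\<close> the single-edge term \<open>-u ln u + (1-u) ln(1-u)\<close> has second derivative
  \<open>1/(1-u) - 1/u = -1/hess_weight u\<close>.  The weight is non-negative for \<open>u \<le> 1/2\<close> and
  negative for \<open>u > 1/2\<close>; since the coordinates sum to at most \<open>1\<close>, at most one
  coordinate can be of the second kind.\<close>
definition hess_weight :: "real \<Rightarrow> real" where
  "hess_weight u = u * (1 - u) / (1 - 2 * u)"

lemma hess_weight_reciprocal:
  fixes u c :: real
  assumes "0 < u" "u < 1"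
  shows "c\<^sup>2 / u - c\<^sup>2 / (1 - u) = c\<^sup>2 / hess_weight u"
proof (cases "u = 1/2")
  case True
  show ?thesis unfolding hess_weight_def True by simp
next
  case False
  then have "1 - 2 * u \<noteq> 0" by simp
  with assms show ?thesis by (simp add: hess_weight_def field_simps)
qed

lemma hess_weight_le_linear:
  fixes u w :: real
  assumes "0 \<le> u" "u + w \<le> 1" "1/2 < w"
  shows "hess_weight u \<le> u * (w / (2 * w - 1))"
proof -
  have "(1 - u) * (2 * w - 1) \<le> w * (1 - 2 * u)" using assms by (simp add: algebra_simps)
  then have "(1 - u) / (1 - 2 * u) \<le> w / (2 * w - 1)"
    using assms by (simp add: divide_simps)
  then show ?thesis
    using assms(1) mult_left_mono unfolding hess_weight_def by fastforce
qed

lemma hess_weight_budget: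
  fixes u :: "'b \<Rightarrow> real" and w r :: real
  assumes "finite J" "\<And>e. e \<in> J \<Longrightarrow> 0 \<le> u e" "0 \<le> r"
    and "1/2 < w" "w \<le> 1" "sum u J + r = 1 - w"
  shows "(\<Sum>e\<in>J. hess_weight (u e)) + r / 2 \<le> w * (1 - w) / (2 * w - 1)"
proof -
  define m where "m = w / (2 * w - 1)"
  have "u e + w \<le> 1" if "e \<in> J" for e
    using member_le_sum[of e J u] assms that by auto
  then have "(\<Sum>e\<in>J. hess_weight (u e)) \<le> (\<Sum>e\<in>J. u e * m)"
    using assms hess_weight_le_linear unfolding m_def by (intro sum_mono) auto
  moreover have "r / 2 \<le> r * m"
    using assms mult_left_mono[of "1/2" m r] by (simp add: m_def field_simps)
  moreover have "(\<Sum>e\<in>J. u e * m) + r * m = (sum u J + r) * m"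
    by (simp add: sum_distrib_right distrib_right)
  moreover have "(sum u J + r) * m = w * (1 - w) / (2 * w - 1)"
    using assms(6) by (simp add: m_def)
  ultimately show ?thesis by linarith
qed

lemma engel_cauchy_schwarz:
  fixes p w :: "'b \<Rightarrow> real"
  assumes "\<And>i. i \<in> S \<Longrightarrow> 0 \<le> w i" "\<And>i. i \<in> S \<Longrightarrow> w i = 0 \<Longrightarrow> p i = 0"
  shows "(sum p S)\<^sup>2 \<le> (\<Sum>i\<in>S. (p i)\<^sup>2 / w i) * sum w S"
proof -
  have "(\<Sum>i\<in>S. p i / sqrt (w i) * sqrt (w i)) = sum p S"
    using assms by (intro sum.cong) auto
  moreover have "(\<Sum>i\<in>S. (p i / sqrt (w i))\<^sup>2) = (\<Sum>i\<in>S. (p i)\<^sup>2 / w i)"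
    using assms by (intro sum.cong) (auto simp: power_divide)
  moreover have "(\<Sum>i\<in>S. (sqrt (w i))\<^sup>2) = sum w S"
    using assms by (intro sum.cong) auto
  ultimately show ?thesis
    using Cauchy_Schwarz_ineq_sum[of "\<lambda>i. p i / sqrt (w i)" "\<lambda>i. sqrt (w i)" S] by simp
qed

lemma engel_cauchy_schwarz_extra:
  fixes p w :: "'b \<Rightarrow> real" and q r :: real
  assumes "finite J" "\<And>i. i \<in> J \<Longrightarrow> 0 \<le> w i" "\<And>i. i \<in> J \<Longrightarrow> w i = 0 \<Longrightarrow> p i = 0"
    and "0 \<le> r" "r = 0 \<Longrightarrow> q = 0"
  shows "(sum p J + q)\<^sup>2 \<le> ((\<Sum>i\<in>J. (p i)\<^sup>2 / w i) + q\<^sup>2 / r) * (sum w J + r)"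
proof -
  define P where "P = case_option q p"
  define W where "W = case_option r w"
  have sum_ext: "sum g (insert None (Some ` J)) = (\<Sum>i\<in>J. g (Some i)) + g None"
    for g :: "'b option \<Rightarrow> real"
    using assms(1) by (simp add: sum.reindex)
  have "(sum P (insert None (Some ` J)))\<^sup>2
      \<le> (\<Sum>i\<in>insert None (Some ` J). (P i)\<^sup>2 / W i) * sum W (insert None (Some ` J))"
    using assms by (intro engel_cauchy_schwarz) (auto simp: P_def W_def)
  then show ?thesis by (simp only: sum_ext) (simp add: P_def W_def)
qed

text \<open>The core estimate \<open>\<Sum> c\<^sub>e\<^sup>2/hess_weight u\<^sub>e + 2 (\<Sum>c)\<^sup>2/(1 - \<Sum>u) \<ge> 0\<close>, in the case
  where a coordinate \<open>k\<close> with \<open>u\<^sub>k > 1/2\<close> is active: its negative contribution is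
  absorbed by Cauchy--Schwarz applied to all remaining terms, together with the budget lemma.\<close>
lemma hessian_form_nonneg_heavy:
  fixes u c :: "'b \<Rightarrow> real"
  assumes fin: "finite I" and u0: "\<And>e. e \<in> I \<Longrightarrow> 0 \<le> u e" and su: "sum u I \<le> 1"
    and cu: "\<And>e. e \<in> I \<Longrightarrow> c e \<noteq> 0 \<Longrightarrow> 0 < u e \<and> u e < 1"
    and cr: "sum c I \<noteq> 0 \<Longrightarrow> sum u I < 1"
    and k: "k \<in> I" "c k \<noteq> 0" "1/2 < u k"
  shows "0 \<le> (\<Sum>e\<in>I. (c e)\<^sup>2 / hess_weight (u e)) + 2 * (sum c I)\<^sup>2 / (1 - sum u I)"
proof -
  define J where "J = I - {k}"
  define \<rho> where "\<rho> = 1 - sum u I"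
  define R where "R = (\<Sum>e\<in>J. (c e)\<^sup>2 / hess_weight (u e)) + 2 * (sum c I)\<^sup>2 / \<rho>"
  define M where "M = u k * (1 - u k) / (2 * u k - 1)"
  have split: "sum f I = f k + sum f J" for f :: "'b \<Rightarrow> real"
    using fin k(1) by (simp add: J_def sum.remove)
  have uk: "u k < 1" using cu k by auto
  have "0 \<le> \<rho>" using su by (simp add: \<rho>_def)
  have rest: "sum u J + \<rho> = 1 - u k" using split[of u] by (simp add: \<rho>_def)
  have light: "u e < 1/2" if "e \<in> J" for e
    using member_le_sum[of e J u] fin u0 rest \<open>0 \<le> \<rho>\<close> k that by (auto simp: J_def)
  have weight_pos: "0 \<le> hess_weight (u e)" if "e \<in> J" for e
    using light[OF that] u0[of e] that by (auto simp: J_def hess_weight_def)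
  text \<open>Cauchy--Schwarz for the entries of \<open>c\<close> off \<open>k\<close> together with \<open>-sum c I\<close>;
    these add up to \<open>-c k\<close>.\<close>
  have "(sum c J + - sum c I)\<^sup>2 \<le>
      ((\<Sum>e\<in>J. (c e)\<^sup>2 / hess_weight (u e)) + (- sum c I)\<^sup>2 / (\<rho> / 2))
      * ((\<Sum>e\<in>J. hess_weight (u e)) + \<rho> / 2)"
  proof (rule engel_cauchy_schwarz_extra)
    show "c e = 0" if "e \<in> J" "hess_weight (u e) = 0" for e
      using that light[OF that(1)] cu[of e] by (auto simp: J_def hess_weight_def)
    show "- sum c I = 0" if "\<rho> / 2 = 0" using that cr by (auto simp: \<rho>_def)
  qed (use fin weight_pos \<open>0 \<le> \<rho>\<close> in \<open>auto simp: J_def\<close>)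
  moreover have "sum c J + - sum c I = - c k" using split[of c] by simp
  moreover have "(- sum c I)\<^sup>2 / (\<rho> / 2) = 2 * (sum c I)\<^sup>2 / \<rho>" by simp
  ultimately have "(c k)\<^sup>2 \<le> R * ((\<Sum>e\<in>J. hess_weight (u e)) + \<rho> / 2)"
    unfolding R_def by (metis power2_minus)
  also have "\<dots> \<le> R * M"
  proof (rule mult_left_mono)
    show "(\<Sum>e\<in>J. hess_weight (u e)) + \<rho> / 2 \<le> M"
      unfolding M_def using fin u0 \<open>0 \<le> \<rho>\<close> k uk rest
      by (intro hess_weight_budget) (auto simp: J_def)
    show "0 \<le> R" unfolding R_def using weight_pos \<open>0 \<le> \<rho>\<close>
      by (intro add_nonneg_nonneg sum_nonneg divide_nonneg_nonneg) auto
  qed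
  finally have "(c k)\<^sup>2 / M \<le> R"
    using k uk by (simp add: M_def divide_simps mult.commute)
  moreover have "(c k)\<^sup>2 / hess_weight (u k) = - ((c k)\<^sup>2 / M)"
    by (simp add: M_def hess_weight_def divide_simps algebra_simps)
  ultimately show ?thesis
    using split[of "\<lambda>e. (c e)\<^sup>2 / hess_weight (u e)"] by (simp add: R_def \<rho>_def)
qed

text \<open>The estimate in general; without a heavy coordinate all terms are non-negative.\<close>
lemma hessian_form_nonneg:
  fixes u c :: "'b \<Rightarrow> real"
  assumes "finite I" "\<And>e. e \<in> I \<Longrightarrow> 0 \<le> u e" and su: "sum u I \<le> 1"
    and cu: "\<And>e. e \<in> I \<Longrightarrow> c e \<noteq> 0 \<Longrightarrow> 0 < u e \<and> u e < 1"
    and "sum c I \<noteq> 0 \<Longrightarrow> sum u I < 1"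
  shows "0 \<le> (\<Sum>e\<in>I. (c e)\<^sup>2 / hess_weight (u e)) + 2 * (sum c I)\<^sup>2 / (1 - sum u I)"
proof (cases "\<exists>k\<in>I. c k \<noteq> 0 \<and> 1/2 < u k")
  case False
  have "0 \<le> (c e)\<^sup>2 / hess_weight (u e)" if "e \<in> I" for e
  proof (cases "c e = 0")
    case False
    with that cu \<open>\<not> (\<exists>k\<in>I. c k \<noteq> 0 \<and> 1/2 < u k)\<close> have "0 < u e" "u e \<le> 1/2" by force+
    then show ?thesis by (simp add: hess_weight_def)
  qed simp
  then show ?thesis using su by (intro add_nonneg_nonneg sum_nonneg) auto
next
  case True
  then obtain k where "k \<in> I" "c k \<noteq> 0" "1/2 < u k" by blast
  then show ?thesis using hessian_form_nonneg_heavy[OF assms] by blast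
qed

definition vertex_entropy :: "'b set \<Rightarrow> ('b \<Rightarrow> real) \<Rightarrow> real" where
  "vertex_entropy I x =
     (\<Sum>e\<in>I. - xlnx (x e) + xlnx (1 - x e)) - 2 * xlnx (1 - (\<Sum>e\<in>I. x e))"

definition sub_simplex :: "'b set \<Rightarrow> ('b \<Rightarrow> real) set" where
  "sub_simplex I = {x. (\<forall>e\<in>I. 0 \<le> x e) \<and> sum x I \<le> 1}"

lemma sub_simplex_le_one:
  assumes "finite I" "x \<in> sub_simplex I" "e \<in> I"
  shows "x e \<le> 1"
  using assms member_le_sum[of e I x] by (auto simp: sub_simplex_def)

lemma sub_simplex_segment:
  assumes "x \<in> sub_simplex I" "y \<in> sub_simplex I" "0 \<le> s" "s \<le> 1"
  shows "(\<lambda>e. y e + s * (x e - y e)) \<in> sub_simplex I"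
proof -
  have comb: "y e + s * (x e - y e) = s * x e + (1 - s) * y e" for e
    by (simp add: algebra_simps)
  have "sum (\<lambda>e. s * x e + (1 - s) * y e) I = s * sum x I + (1 - s) * sum y I"
    by (simp add: sum.distrib sum_distrib_left)
  also have "\<dots> \<le> s * 1 + (1 - s) * 1"
    using assms by (intro add_mono mult_left_mono) (auto simp: sub_simplex_def)
  finally show ?thesis
    using assms unfolding comb by (auto simp: sub_simplex_def)
qed

lemma vertex_entropy_segment_continuous:
  assumes "finite I" "x \<in> sub_simplex I" "y \<in> sub_simplex I"
  shows "continuous_on {0..1} (\<lambda>s. vertex_entropy I (\<lambda>e. y e + s * (x e - y e)))"
proof -
  have seg: "(\<lambda>e. y e + s * (x e - y e)) \<in> sub_simplex I" if "s \<in> {0..1}" for s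
    using sub_simplex_segment assms that by auto
  have xlnx_comp: "continuous_on {0..1} (\<lambda>s. xlnx (g s))"
    if "continuous_on {0..1} g" "\<And>s. s \<in> {0..1} \<Longrightarrow> 0 \<le> g s" for g
    by (rule continuous_on_compose2[OF xlnx_continuous_on that(1)]) (use that(2) in auto)
  show ?thesis unfolding vertex_entropy_def
    using seg sub_simplex_le_one[OF assms(1) seg]
    by (intro continuous_intros xlnx_comp) (auto simp: sub_simplex_def)
qed

text \<open>The second derivative of the vertex term along the direction \<open>b\<close> at the point
  \<open>y + s b\<close> is non-positive: by \<open>hess_weight_reciprocal\<close> it is the negative of the form in
  \<open>hessian_form_nonneg\<close>.\<close>
lemma curvature_nonpos:
  fixes y b :: "'b \<Rightarrow> real" and s :: real
  assumes fin: "finite I"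
    and p: "\<And>e. e \<in> I \<Longrightarrow> 0 < y e + s * b e \<or> (y e = 0 \<and> b e = 0)"
      "\<And>e. e \<in> I \<Longrightarrow> 0 < (1 - y e) + s * - b e \<or> (1 - y e = 0 \<and> - b e = 0)"
    and q: "0 < (1 - sum y I) + s * - sum b I \<or> (1 - sum y I = 0 \<and> - sum b I = 0)"
  shows "(\<Sum>e\<in>I. - ((b e)\<^sup>2 / (y e + s * b e)) + (- b e)\<^sup>2 / ((1 - y e) + s * - b e))
      - 2 * ((- sum b I)\<^sup>2 / ((1 - sum y I) + s * - sum b I)) \<le> 0"
proof -
  define u where "u e = y e + s * b e" for e
  have sum_u: "1 - sum u I = (1 - sum y I) + s * - sum b I"
    by (simp add: u_def sum.distrib sum_distrib_left)
  have "0 \<le> (\<Sum>e\<in>I. (b e)\<^sup>2 / hess_weight (u e)) + 2 * (sum b I)\<^sup>2 / (1 - sum u I)"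
  proof (rule hessian_form_nonneg[OF fin])
    show "0 \<le> u e" if "e \<in> I" for e using p(1)[OF that] by (auto simp: u_def)
    show "sum u I \<le> 1" using q sum_u by auto
    show "0 < u e \<and> u e < 1" if "e \<in> I" "b e \<noteq> 0" for e
      using p(1)[OF that(1)] p(2)[OF that(1)] that(2) by (auto simp: u_def algebra_simps)
    show "sum u I < 1" if "sum b I \<noteq> 0" using q sum_u that by auto
  qed
  moreover have "(\<Sum>e\<in>I. (b e)\<^sup>2 / hess_weight (u e)) =
      (\<Sum>e\<in>I. (b e)\<^sup>2 / (y e + s * b e)) - (\<Sum>e\<in>I. (- b e)\<^sup>2 / ((1 - y e) + s * - b e))"
    unfolding sum_subtractf[symmetric]
  proof (intro sum.cong refl)
    fix e assume "e \<in> I"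
    show "(b e)\<^sup>2 / hess_weight (u e) = (b e)\<^sup>2 / (y e + s * b e) - (- b e)\<^sup>2 / ((1 - y e) + s * - b e)"
    proof (cases "b e = 0")
      case False
      with p(1)[OF \<open>e \<in> I\<close>] p(2)[OF \<open>e \<in> I\<close>] have "0 < u e" "u e < 1"
        by (auto simp: u_def algebra_simps)
      from hess_weight_reciprocal[OF this, of "b e"] show ?thesis
        by (simp add: u_def algebra_simps)
    qed simp
  qed
  moreover have "(\<Sum>e\<in>I. - ((b e)\<^sup>2 / (y e + s * b e)) + (- b e)\<^sup>2 / ((1 - y e) + s * - b e)) =
      - (\<Sum>e\<in>I. (b e)\<^sup>2 / (y e + s * b e)) + (\<Sum>e\<in>I. (- b e)\<^sup>2 / ((1 - y e) + s * - b e))"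
    by (simp add: sum.distrib sum_negf sum_subtractf)
  ultimately show ?thesis by (simp add: sum_u)
qed

lemma vertex_entropy_segment_concave_interior:
  assumes fin: "finite I" and x: "x \<in> sub_simplex I" and y: "y \<in> sub_simplex I"
  shows "concave_on {0<..<1} (\<lambda>s. vertex_entropy I (\<lambda>e. y e + s * (x e - y e)))"
proof -
  define b where "b e = x e - y e" for e
  define B where "B = sum b I"
  define Y where "Y = sum y I"
  have ends: "0 \<le> y e" "0 \<le> y e + b e" "0 \<le> 1 - y e" "0 \<le> (1 - y e) + - b e" if "e \<in> I" for e
    using that x y sub_simplex_le_one[OF fin] by (auto simp: sub_simplex_def b_def)
  have ends_sum: "0 \<le> 1 - Y" "0 \<le> (1 - Y) + - B"
    using x y by (auto simp: sub_simplex_def Y_def B_def b_def sum_subtractf)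
  define \<phi> where "\<phi> s =
      (\<Sum>e\<in>I. - xlnx (y e + s * b e) + xlnx ((1 - y e) + s * - b e)) - 2 * xlnx ((1 - Y) + s * - B)"
    for s
  have arg_edge: "1 - (y e + s * b e) = (1 - y e) + s * - b e" for e s
    by simp
  have arg_vertex: "1 - (\<Sum>e\<in>I. y e + s * b e) = (1 - Y) + s * - B" for s
    by (simp add: Y_def B_def sum.distrib sum_distrib_left)
  have "vertex_entropy I (\<lambda>e. y e + s * (x e - y e)) = \<phi> s" for s
    unfolding vertex_entropy_def \<phi>_def b_def[symmetric] arg_edge arg_vertex ..
  then have "(\<lambda>s. vertex_entropy I (\<lambda>e. y e + s * (x e - y e))) = \<phi>" ..
  moreover have "concave_on {0<..<1} \<phi>"
    unfolding \<phi>_def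
  proof (rule f''_le0_imp_concave)
    fix s :: real assume "s \<in> {0<..<1}"
    then have s: "0 < s" "s < 1" by auto
    note pos = affine_pos_or_const[OF _ _ s]
    have p: "0 < y e + s * b e \<or> (y e = 0 \<and> b e = 0)"
      "0 < (1 - y e) + s * - b e \<or> (1 - y e = 0 \<and> - b e = 0)" if "e \<in> I" for e
      using pos ends[OF that] by blast+
    have q: "0 < (1 - Y) + s * - B \<or> (1 - Y = 0 \<and> - B = 0)"
      using pos ends_sum by blast
    show "((\<lambda>s. (\<Sum>e\<in>I. - xlnx (y e + s * b e) + xlnx ((1 - y e) + s * - b e))
        - 2 * xlnx ((1 - Y) + s * - B)) has_real_derivative
      (\<Sum>e\<in>I. - (b e * (ln (y e + s * b e) + 1)) + - b e * (ln ((1 - y e) + s * - b e) + 1))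
        - 2 * (- B * (ln ((1 - Y) + s * - B) + 1))) (at s)"
      by (intro DERIV_diff DERIV_sum DERIV_add DERIV_minus DERIV_cmult xlnx_affine_has_derivative p q)
    show "((\<lambda>s. (\<Sum>e\<in>I. - (b e * (ln (y e + s * b e) + 1)) + - b e * (ln ((1 - y e) + s * - b e) + 1))
        - 2 * (- B * (ln ((1 - Y) + s * - B) + 1))) has_real_derivative
      (\<Sum>e\<in>I. - ((b e)\<^sup>2 / (y e + s * b e)) + (- b e)\<^sup>2 / ((1 - y e) + s * - b e))
        - 2 * ((- B)\<^sup>2 / ((1 - Y) + s * - B))) (at s)"
      by (intro DERIV_diff DERIV_sum DERIV_add DERIV_minus DERIV_cmult ln_affine_has_derivative p q)
    show "(\<Sum>e\<in>I. - ((b e)\<^sup>2 / (y e + s * b e)) + (- b e)\<^sup>2 / ((1 - y e) + s * - b e))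
        - 2 * ((- B)\<^sup>2 / ((1 - Y) + s * - B)) \<le> 0"
      unfolding Y_def B_def using fin p q[unfolded Y_def B_def] by (rule curvature_nonpos)
  qed simp
  ultimately show ?thesis by simp
qed

lemma vertex_entropy_concave:
  assumes "finite I"
  shows "concave_fun_on (sub_simplex I) (vertex_entropy I)"
  unfolding concave_fun_on_def
proof (intro ballI allI impI)
  fix x y and t :: real
  assume x: "x \<in> sub_simplex I" and y: "y \<in> sub_simplex I" and t: "0 \<le> t \<and> t \<le> 1"
  have "concave_on {0..1} (\<lambda>s. vertex_entropy I (\<lambda>e. y e + s * (x e - y e)))"
    using assms x y
    by (intro concave_on_closed_interval vertex_entropy_segment_concave_interior
        vertex_entropy_segment_continuous) auto
  from concave_onD[OF this, of t 0 1] t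
  show "t * vertex_entropy I x + (1 - t) * vertex_entropy I y
      \<le> vertex_entropy I (\<lambda>e. t * x e + (1 - t) * y e)"
    by (simp add: algebra_simps)
qed

lemma vertex_entropy_zero:
  assumes "\<And>e. e \<in> I \<Longrightarrow> x e = 0"
  shows "vertex_entropy I x = 0"
  using assms by (simp add: vertex_entropy_def xlnx_def)

lemma vertex_entropy_unit:
  fixes I :: "'b set"
  assumes "finite I" "x \<in> sub_simplex I" "k \<in> I" "x k = 1"
  shows "vertex_entropy I x = 0"
proof -
  have split: "sum f I = f k + sum f (I - {k})" for f :: "'b \<Rightarrow> real"
    using assms by (simp add: sum.remove)
  have "sum x (I - {k}) \<le> 0" using split[of x] assms by (simp add: sub_simplex_def)
  then have rest: "x e = 0" if "e \<in> I - {k}" for e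
    using assms that sum_nonneg_eq_0_iff[of "I - {k}" x] sum_nonneg[of "I - {k}" x]
    by (auto simp: sub_simplex_def)
  then have "sum x I = 1" using split[of x] assms by simp
  moreover have "(\<Sum>e\<in>I - {k}. - xlnx (x e) + xlnx (1 - x e)) = 0"
    using rest by (simp add: xlnx_def)
  ultimately show ?thesis
    using split[of "\<lambda>e. - xlnx (x e) + xlnx (1 - x e)"] assms by (simp add: vertex_entropy_def xlnx_def)
qed

text \<open>A concave function on the sub-simplex that is non-negative at its vertices is
  non-negative everywhere: peel off one coordinate at a time.\<close>
lemma concave_sub_simplex_nonneg:
  fixes I :: "'b set" and f :: "('b \<Rightarrow> real) \<Rightarrow> real"
  assumes fin: "finite I" and conc: "concave_fun_on (sub_simplex I) f"
    and at_zero: "\<And>x. x \<in> sub_simplex I \<Longrightarrow> (\<And>e. e \<in> I \<Longrightarrow> x e = 0) \<Longrightarrow> 0 \<le> f x"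
    and at_unit: "\<And>x k. x \<in> sub_simplex I \<Longrightarrow> k \<in> I \<Longrightarrow> x k = 1 \<Longrightarrow> 0 \<le> f x"
    and x: "x \<in> sub_simplex I"
  shows "0 \<le> f x"
proof -
  have "\<forall>x \<in> sub_simplex I. (\<forall>e \<in> I - F. x e = 0) \<longrightarrow> 0 \<le> f x" if "finite F" for F
    using that
  proof (induction F rule: finite_induct)
    case empty
    then show ?case using at_zero by auto
  next
    case (insert k F)
    show ?case
    proof (intro ballI impI)
      fix x assume x: "x \<in> sub_simplex I" and supp: "\<forall>e \<in> I - insert k F. x e = 0"
      consider "k \<notin> I \<or> x k = 0" | "k \<in> I" "x k = 1" | "k \<in> I" "0 < x k" "x k < 1"
        using x sub_simplex_le_one[OF fin x] by (force simp: sub_simplex_def)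
      then show "0 \<le> f x"
      proof cases
        case 1
        then show ?thesis using insert.IH x supp by blast
      next
        case 2
        then show ?thesis using at_unit x by blast
      next
        case 3
        text \<open>Write \<open>x\<close> as a convex combination of the unit vector at \<open>k\<close> and a point
          supported in \<open>F\<close>.\<close>
        define \<delta> where "\<delta> e = (if e = k then 1 else 0 :: real)" for e
        define z where "z e = (if e = k then 0 else x e / (1 - x k))" for e
        have split: "sum g I = g k + sum g (I - {k})" for g :: "'b \<Rightarrow> real"
          using fin 3 by (simp add: sum.remove)
        have "\<delta> \<in> sub_simplex I" using split[of \<delta>] by (simp add: sub_simplex_def \<delta>_def)
        have "sum z I = sum x (I - {k}) / (1 - x k)"
          using split[of z] by (simp add: z_def sum_divide_distrib)
        also have "\<dots> \<le> 1" using split[of x] x 3 by (simp add: sub_simplex_def divide_simps)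
        finally have "z \<in> sub_simplex I" using x 3 by (simp add: sub_simplex_def z_def)
        moreover have "\<forall>e \<in> I - F. z e = 0" using supp by (simp add: z_def)
        ultimately have "0 \<le> f z" using insert.IH by blast
        moreover have "0 \<le> f \<delta>" using at_unit \<open>\<delta> \<in> sub_simplex I\<close> 3 by (simp add: \<delta>_def)
        moreover have "x k * f \<delta> + (1 - x k) * f z \<le> f (\<lambda>e. x k * \<delta> e + (1 - x k) * z e)"
          using conc \<open>\<delta> \<in> sub_simplex I\<close> \<open>z \<in> sub_simplex I\<close> 3
          unfolding concave_fun_on_def by auto
        moreover have "(\<lambda>e. x k * \<delta> e + (1 - x k) * z e) = x"
          using 3 by (auto simp: \<delta>_def z_def)
        ultimately show ?thesis using 3 by (smt (verit) mult_nonneg_nonneg)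
      qed
    qed
  qed
  from this[OF fin] x show ?thesis by blast
qed

lemma concave_fun_on_scaled_sum:
  assumes "0 \<le> c" "\<And>v. v \<in> V \<Longrightarrow> concave_fun_on S (f v)"
  shows "concave_fun_on S (\<lambda>x. c * (\<Sum>v\<in>V. f v x))"
  unfolding concave_fun_on_def
proof (intro ballI allI impI)
  fix x y and t :: real
  assume "x \<in> S" "y \<in> S" "0 \<le> t \<and> t \<le> 1"
  then have "(\<Sum>v\<in>V. t * f v x + (1 - t) * f v y) \<le> (\<Sum>v\<in>V. f v (\<lambda>e. t * x e + (1 - t) * y e))"
    using assms(2) unfolding concave_fun_on_def by (intro sum_mono) auto
  then have "c * (\<Sum>v\<in>V. t * f v x + (1 - t) * f v y) \<le> c * (\<Sum>v\<in>V. f v (\<lambda>e. t * x e + (1 - t) * y e))"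
    using assms(1) by (rule mult_left_mono)
  moreover have "c * (\<Sum>v\<in>V. t * f v x + (1 - t) * f v y)
      = t * (c * (\<Sum>v\<in>V. f v x)) + (1 - t) * (c * (\<Sum>v\<in>V. f v y))"
    unfolding sum.distrib sum_distrib_left[symmetric] by (simp add: algebra_simps)
  ultimately show "t * (c * (\<Sum>v\<in>V. f v x)) + (1 - t) * (c * (\<Sum>v\<in>V. f v y))
      \<le> c * (\<Sum>v\<in>V. f v (\<lambda>e. t * x e + (1 - t) * y e))"
    by simp
qed

lemma concave_fun_on_subset:
  "concave_fun_on T f \<Longrightarrow> S \<subseteq> T \<Longrightarrow> concave_fun_on S f"
  unfolding concave_fun_on_def by blast

lemma FM_sub_simplex:
  assumes "v \<in> V"
  shows "FM V E \<subseteq> sub_simplex (incident E v)"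
  using assms by (auto simp: FM_def sub_simplex_def incident_def)

lemma SB_vertex_sum:
  "SB V E = (\<lambda>x. 1/2 * (\<Sum>v\<in>V. vertex_entropy (incident E v) x))"
  by (simp add: fun_eq_iff SB_def vertex_entropy_def)

theorem proposition4:
  fixes V :: "'a set" and E :: "'a set set"
  assumes "finite_simple_graph V E"
  shows "(\<forall>x\<in>FM V E. SB V E x \<ge> 0) \<and> concave_fun_on (FM V E) (SB V E)"
proof
  have "finite V" "E \<subseteq> Pow V"
    using assms by (auto simp: finite_simple_graph_def)
  then have "finite E" by (simp add: finite_subset)
  then have fin: "finite (incident E v)" for v by (simp add: incident_def)
  have conc: "concave_fun_on (FM V E) (vertex_entropy (incident E v))" if "v \<in> V" for v
    using vertex_entropy_concave[OF fin] FM_sub_simplex[OF that] by (rule concave_fun_on_subset)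
  have nonneg: "0 \<le> vertex_entropy (incident E v) x" if "v \<in> V" "x \<in> FM V E" for v x
  proof (rule concave_sub_simplex_nonneg[OF fin vertex_entropy_concave[OF fin]])
    show "x \<in> sub_simplex (incident E v)" using FM_sub_simplex[OF that(1)] that(2) by blast
  qed (simp_all add: vertex_entropy_zero vertex_entropy_unit[OF fin])
  show "\<forall>x\<in>FM V E. SB V E x \<ge> 0"
    unfolding SB_vertex_sum using nonneg by (simp add: sum_nonneg)
  show "concave_fun_on (FM V E) (SB V E)"
    unfolding SB_vertex_sum using conc by (intro concave_fun_on_scaled_sum) auto
qed

end
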